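(* Let $(S,d)$ be a metric space, let $\mu$ be a finite signed Borel measure on $S$ that is separable (i.e. there is a separable $S_0\subset S$ with $|\mu|(S_0)=|\mu|(S)$), and let $\bullet\in\{\mathrm{FM},\mathrm{BL}\}$. Then there exists $f^\bullet_\mu\in\operatorname{ext}(B^S_\bullet)$ such that $\|\mu\|^*_\bullet=\int_S f^\bullet_\mu\,d\mu$.
   Context: $\mathrm{BL}(S)$ is the space of bounded real-valued Lipschitz functions on $S$, $|f|_L=\sup_{x\neq y}|f(x)-f(y)|/d(x,y)$, $\|f\|_{\mathrm{BL}}=\|f\|_\infty+|f|_L$, $\|f\|_{\mathrm{FM}}=\max(\|f\|_\infty,|f|_L)$, $B^S_\bullet=\{f\in\mathrm{BL}(S):\|f\|_\bullet\le1\}$, $\operatorname{ext}$ denotes the set of extreme points, $|\mu|$ is the total variation of $\mu$, and $\|\mu\|^*_\bullet=\sup_{f\in B^S_\bullet}\int_S f\,d\mu$. *)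

theory Defs
  imports "HOL-Analysis.Analysis"
begin

definition BL_fun :: "('a::metric_space \<Rightarrow> real) \<Rightarrow> bool" where
  "BL_fun f \<longleftrightarrow> bounded (range f) \<and> (\<exists>L. \<forall>x y. \<bar>f x - f y\<bar> \<le> L * dist x y)"

definition sup_norm :: "('a \<Rightarrow> real) \<Rightarrow> real" where
  "sup_norm f = (SUP x. \<bar>f x\<bar>)"

definition lip_seminorm :: "('a::metric_space \<Rightarrow> real) \<Rightarrow> real" where
  "lip_seminorm f = (if (UNIV :: 'a set) = {} \<or> (\<forall>x y::'a. x = y) then 0
     else (SUP p\<in>{(x,y). x \<noteq> y}. \<bar>f (fst p) - f (snd p)\<bar> / dist (fst p) (snd p)))"

datatype norm_kind = FM | BL

definition bl_norm :: "norm_kind \<Rightarrow> ('a::metric_space \<Rightarrow> real) \<Rightarrow> real" where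
  "bl_norm k f = (case k of
      BL \<Rightarrow> sup_norm f + lip_seminorm f
    | FM \<Rightarrow> max (sup_norm f) (lip_seminorm f))"

definition unit_ball :: "norm_kind \<Rightarrow> ('a::metric_space \<Rightarrow> real) set" where
  "unit_ball k = {f. BL_fun f \<and> bl_norm k f \<le> 1}"

definition ext_pts :: "('a \<Rightarrow> real) set \<Rightarrow> ('a \<Rightarrow> real) set" where
  "ext_pts B = {f \<in> B. \<forall>g\<in>B. \<forall>h\<in>B. \<forall>t::real. 0 < t \<and> t < 1 \<and>
       f = (\<lambda>x. t * g x + (1 - t) * h x) \<longrightarrow> g = h}"

text \<open>A finite signed Borel measure is represented by its Jordan decomposition
  (Mp, Mn): two finite Borel measures that are mutually singular.\<close>
definition signed_borel_jordan :: "'a::metric_space measure \<Rightarrow> 'a measure \<Rightarrow> bool" where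
  "signed_borel_jordan Mp Mn \<longleftrightarrow>
     sets Mp = sets borel \<and> sets Mn = sets borel \<and>
     finite_measure Mp \<and> finite_measure Mn \<and>
     (\<exists>P\<in>sets borel. emeasure Mp (UNIV - P) = 0 \<and> emeasure Mn P = 0)"

definition total_variation :: "'a measure \<Rightarrow> 'a measure \<Rightarrow> 'a set \<Rightarrow> real" where
  "total_variation Mp Mn A = measure Mp A + measure Mn A"

definition signed_integral :: "'a measure \<Rightarrow> 'a measure \<Rightarrow> ('a \<Rightarrow> real) \<Rightarrow> real" where
  "signed_integral Mp Mn f = integral\<^sup>L Mp f - integral\<^sup>L Mn f"

definition separable_signed :: "'a::metric_space measure \<Rightarrow> 'a measure \<Rightarrow> bool" where
  "separable_signed Mp Mn \<longleftrightarrow>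
     (\<exists>S0\<in>sets borel. separable_space (subtopology euclidean S0) \<and>
        total_variation Mp Mn S0 = total_variation Mp Mn UNIV)"

definition dual_norm :: "norm_kind \<Rightarrow> 'a::metric_space measure \<Rightarrow> 'a measure \<Rightarrow> real" where
  "dual_norm k Mp Mn = (SUP f\<in>unit_ball k. signed_integral Mp Mn f)"

end

theory Submission
  imports Defs
begin

text \<open>
  The unit ball of either norm can be described by pointwise inequalities, so it is compact in the
  topology of pointwise convergence (Tychonoff). Because \<open>\<mu>\<close> is carried by a separable set,
  integration against \<open>\<mu>\<close> is continuous on the ball for this topology: for 1-Lipschitz functions,
  being close at finitely many points of a dense sequence forces pointwise convergence on its closure,
  and dominated convergence applies. Bauer's maximum principle then places the supremum at an extreme
  point: by Zorn's lemma the compact set of maximisers contains a minimal closed extreme subset, and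
  this must be a singleton, since otherwise some point evaluation would cut out a smaller one.
\<close>

section \<open>Pointwise description of the unit balls\<close>

lemma sup_norm_le_iff:
  assumes "bounded (range f)"
  shows "sup_norm f \<le> c \<longleftrightarrow> (\<forall>x. \<bar>f x\<bar> \<le> c)"
proof -
  have "bdd_above (range (\<lambda>x. \<bar>f x\<bar>))"
    using assms by (auto simp: bounded_iff bdd_above_def)
  then show ?thesis
    unfolding sup_norm_def by (simp add: cSUP_le_iff)
qed

lemma lip_seminorm_le_iff:
  fixes f :: "'a::metric_space \<Rightarrow> real"
  assumes "\<exists>L. \<forall>x y. \<bar>f x - f y\<bar> \<le> L * dist x y"
  shows "lip_seminorm f \<le> c \<longleftrightarrow> 0 \<le> c \<and> (\<forall>x y. \<bar>f x - f y\<bar> \<le> c * dist x y)"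
proof (cases "\<forall>x y::'a. x = y")
  case True
  then have "\<bar>f x - f y\<bar> \<le> c * dist x y" for x y
    by (metis abs_zero diff_self dist_self mult_zero_right order_refl)
  with True show ?thesis
    unfolding lip_seminorm_def by auto
next
  case False
  then obtain a b :: 'a where "a \<noteq> b" by blast
  obtain L where L: "\<And>x y. \<bar>f x - f y\<bar> \<le> L * dist x y"
    using assms by blast
  have "bdd_above ((\<lambda>p. \<bar>f (fst p) - f (snd p)\<bar> / dist (fst p) (snd p)) ` {(x, y::'a). x \<noteq> y})"
    by (rule bdd_aboveI2[of _ _ L]) (auto simp: divide_le_eq L)
  moreover have "{(x, y::'a). x \<noteq> y} \<noteq> {}"
    using \<open>a \<noteq> b\<close> by auto
  moreover have "lip_seminorm f =
      (SUP p\<in>{(x, y). x \<noteq> y}. \<bar>f (fst p) - f (snd p)\<bar> / dist (fst p) (snd p))"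
    using False unfolding lip_seminorm_def by (intro if_not_P) simp
  ultimately have "lip_seminorm f \<le> c \<longleftrightarrow>
      (\<forall>p\<in>{(x, y). x \<noteq> y}. \<bar>f (fst p) - f (snd p)\<bar> / dist (fst p) (snd p) \<le> c)"
    by (simp add: cSUP_le_iff)
  also have "\<dots> \<longleftrightarrow> (\<forall>x y. x \<noteq> y \<longrightarrow> \<bar>f x - f y\<bar> \<le> c * dist x y)"
    by (auto simp: divide_le_eq mult.commute)
  also have "\<dots> \<longleftrightarrow> 0 \<le> c \<and> (\<forall>x y. \<bar>f x - f y\<bar> \<le> c * dist x y)"
  proof (intro iffI conjI allI)
    assume le: "\<forall>x y. x \<noteq> y \<longrightarrow> \<bar>f x - f y\<bar> \<le> c * dist x y"
    have "0 \<le> c * dist a b"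
      using le \<open>a \<noteq> b\<close> by (meson abs_ge_zero order_trans)
    then show "0 \<le> c"
      using \<open>a \<noteq> b\<close> by (simp add: zero_le_mult_iff)
    show "\<bar>f x - f y\<bar> \<le> c * dist x y" for x y
      using le by (cases "x = y") auto
  qed auto
  finally show ?thesis .
qed

lemma lip_seminorm_nonneg:
  fixes f :: "'a::metric_space \<Rightarrow> real"
  assumes "\<exists>L. \<forall>x y. \<bar>f x - f y\<bar> \<le> L * dist x y"
  shows "0 \<le> lip_seminorm f"
  using lip_seminorm_le_iff[OF assms, of "lip_seminorm f"] by simp

text \<open>
  For \<open>BL\<close>, \<open>\<parallel>f\<parallel>\<^sub>\<infinity> + |f|\<^sub>L \<le> 1\<close> holds iff at every point \<open>x\<close> the Lipschitz constant is
  at most \<open>1 - |f x|\<close>. Unlike the norms, this pointwise form is closed under pointwise limits.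
\<close>

definition lip_budget :: "norm_kind \<Rightarrow> real \<Rightarrow> real" where
  "lip_budget k v = (case k of FM \<Rightarrow> 1 | BL \<Rightarrow> 1 - \<bar>v\<bar>)"

lemma lip_budget_le_one: "lip_budget k v \<le> 1"
  by (cases k) (simp_all add: lip_budget_def)

lemma lip_budget_nonneg: "\<bar>v\<bar> \<le> 1 \<Longrightarrow> 0 \<le> lip_budget k v"
  by (cases k) (simp_all add: lip_budget_def)

lemma continuous_on_lip_budget: "continuous_on A (lip_budget k)"
  by (cases k) (auto simp: lip_budget_def intro!: continuous_intros)

lemma bl_norm_le_one_iff:
  fixes f :: "'a::metric_space \<Rightarrow> real"
  assumes "BL_fun f"
  shows "bl_norm k f \<le> 1 \<longleftrightarrow> (\<forall>x. \<bar>f x\<bar> \<le> 1 \<and> lip_seminorm f \<le> lip_budget k (f x))"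
proof -
  have bounded: "bounded (range f)" and lip: "\<exists>L. \<forall>x y. \<bar>f x - f y\<bar> \<le> L * dist x y"
    using assms unfolding BL_fun_def by auto
  have "sup_norm f + lip_seminorm f \<le> 1 \<longleftrightarrow> (\<forall>x. \<bar>f x\<bar> \<le> 1 - lip_seminorm f)"
    using sup_norm_le_iff[OF bounded, of "1 - lip_seminorm f"] by (simp add: le_diff_eq)
  moreover have "\<bar>f x\<bar> \<le> 1 - lip_seminorm f \<longleftrightarrow> \<bar>f x\<bar> \<le> 1 \<and> lip_seminorm f \<le> 1 - \<bar>f x\<bar>" for x
    using lip_seminorm_nonneg[OF lip] by arith
  ultimately show ?thesis
    using sup_norm_le_iff[OF bounded, of 1] by (cases k) (auto simp: bl_norm_def lip_budget_def)
qed

definition pointwise_unit_ball :: "norm_kind \<Rightarrow> ('a::metric_space \<Rightarrow> real) set" where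
  "pointwise_unit_ball k =
     {f. \<forall>x. \<bar>f x\<bar> \<le> 1 \<and> (\<forall>y z. \<bar>f y - f z\<bar> \<le> lip_budget k (f x) * dist y z)}"

lemma pointwise_unit_ball_abs_le: "f \<in> pointwise_unit_ball k \<Longrightarrow> \<bar>f x\<bar> \<le> 1"
  unfolding pointwise_unit_ball_def by blast

lemma pointwise_unit_ball_lipschitz:
  assumes "f \<in> pointwise_unit_ball k"
  shows "\<bar>f y - f z\<bar> \<le> dist y z"
proof -
  have "\<bar>f y - f z\<bar> \<le> lip_budget k (f y) * dist y z"
    using assms unfolding pointwise_unit_ball_def by blast
  also have "\<dots> \<le> dist y z"
    using lip_budget_le_one mult_right_mono[of _ 1 "dist y z"] by fastforce
  finally show ?thesis .
qed

lemma pointwise_unit_ball_BL_fun: "f \<in> pointwise_unit_ball k \<Longrightarrow> BL_fun f"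
  unfolding BL_fun_def bounded_iff
  by (metis pointwise_unit_ball_abs_le pointwise_unit_ball_lipschitz mult_1 rangeE real_norm_def)

lemma unit_ball_eq_pointwise_unit_ball: "unit_ball k = pointwise_unit_ball k"
proof (intro set_eqI iffI)
  fix f :: "'a \<Rightarrow> real"
  assume "f \<in> unit_ball k"
  then have "BL_fun f" and "bl_norm k f \<le> 1"
    unfolding unit_ball_def by auto
  with lip_seminorm_le_iff show "f \<in> pointwise_unit_ball k"
    unfolding pointwise_unit_ball_def bl_norm_le_one_iff[OF \<open>BL_fun f\<close>] BL_fun_def by blast
next
  fix f :: "'a \<Rightarrow> real"
  assume f: "f \<in> pointwise_unit_ball k"
  then have "BL_fun f"
    by (rule pointwise_unit_ball_BL_fun)
  moreover have "lip_seminorm f \<le> lip_budget k (f x)" for x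
    using f lip_budget_nonneg lip_seminorm_le_iff \<open>BL_fun f\<close>
    unfolding pointwise_unit_ball_def BL_fun_def by blast
  ultimately show "f \<in> unit_ball k"
    using f bl_norm_le_one_iff pointwise_unit_ball_abs_le unfolding unit_ball_def by blast
qed

lemma closed_pointwise_unit_ball: "closed (pointwise_unit_ball k)"
  unfolding pointwise_unit_ball_def
  by (intro closed_Collect_all closed_Collect_conj closed_Collect_le continuous_intros
      continuous_on_product_coordinates continuous_on_compose2[OF continuous_on_lip_budget]) auto

lemma compact_pointwise_unit_ball: "compact (pointwise_unit_ball k)"
proof -
  have "compactin (product_topology (\<lambda>_. euclidean) UNIV) (PiE UNIV (\<lambda>_::'a. {-1..1::real}))"
    by (simp add: compactin_PiE)
  then have "compact ((UNIV :: 'a set) \<rightarrow> {-1..1::real})"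
    by (simp add: euclidean_product_topology PiE_UNIV_domain)
  moreover have "pointwise_unit_ball k \<subseteq> ((UNIV :: 'a set) \<rightarrow> {-1..1::real})"
    using pointwise_unit_ball_abs_le by (fastforce simp: abs_le_iff)
  ultimately show ?thesis
    using compact_Int_closed closed_pointwise_unit_ball by (metis inf.absorb_iff2)
qed

section \<open>Extreme subsets and Bauer's maximum principle\<close>

definition extreme_subset :: "('a \<Rightarrow> real) set \<Rightarrow> ('a \<Rightarrow> real) set \<Rightarrow> bool" where
  "extreme_subset K F \<longleftrightarrow> F \<subseteq> K \<and>
     (\<forall>g\<in>K. \<forall>h\<in>K. \<forall>t::real. 0 < t \<and> t < 1 \<and> (\<lambda>x. t * g x + (1 - t) * h x) \<in> F \<longrightarrow> g \<in> F \<and> h \<in> F)"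

lemma extreme_subset_refl: "extreme_subset K K"
  unfolding extreme_subset_def by blast

lemma extreme_subset_Inter:
  assumes "\<C> \<noteq> {}" "\<And>G. G \<in> \<C> \<Longrightarrow> extreme_subset K G"
  shows "extreme_subset K (\<Inter>\<C>)"
  using assms unfolding extreme_subset_def by blast

lemma convex_combination_eq_upper_bound:
  fixes a b c t :: real
  assumes "0 < t" "t < 1" "a \<le> c" "b \<le> c" "t * a + (1 - t) * b = c"
  shows "a = c \<and> b = c"
proof -
  have "t * (c - a) + (1 - t) * (c - b) = 0"
    using assms(5) by (simp add: algebra_simps)
  moreover have "0 \<le> t * (c - a)" "0 \<le> (1 - t) * (c - b)"
    using assms(1-4) by simp_all
  ultimately have "t * (c - a) = 0" "(1 - t) * (c - b) = 0"
    by linarith+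
  then show ?thesis
    using assms(1,2) by simp
qed

lemma extreme_subset_maximizers:
  assumes "extreme_subset K F"
    and affine: "\<And>g h t. g \<in> K \<Longrightarrow> h \<in> K \<Longrightarrow> 0 < t \<Longrightarrow> t < 1 \<Longrightarrow>
      \<phi> (\<lambda>x. t * g x + (1 - t) * h x) = t * \<phi> g + (1 - t) * \<phi> h"
    and le: "\<And>g. g \<in> F \<Longrightarrow> \<phi> g \<le> c"
  shows "extreme_subset K {f \<in> F. \<phi> f = c}"
  unfolding extreme_subset_def
proof (intro conjI ballI allI impI)
  show "{f \<in> F. \<phi> f = c} \<subseteq> K"
    using assms(1) unfolding extreme_subset_def by blast
  fix g h t
  assume "g \<in> K" "h \<in> K"
    and comb: "0 < t \<and> t < 1 \<and> (\<lambda>x. t * g x + (1 - t) * h x) \<in> {f \<in> F. \<phi> f = c}"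
  then have "g \<in> F" "h \<in> F"
    using assms(1) unfolding extreme_subset_def by blast+
  moreover have "t * \<phi> g + (1 - t) * \<phi> h = c"
    using comb affine[OF \<open>g \<in> K\<close> \<open>h \<in> K\<close>, of t] by simp
  ultimately have "\<phi> g = c \<and> \<phi> h = c"
    using convex_combination_eq_upper_bound[of t "\<phi> g" c "\<phi> h"] comb le by blast
  with \<open>g \<in> F\<close> \<open>h \<in> F\<close> show "g \<in> {f \<in> F. \<phi> f = c}" "h \<in> {f \<in> F. \<phi> f = c}"
    by simp_all
qed

lemma closed_chain_Inter_nonempty:
  fixes F :: "'a::topological_space set"
  assumes "compact F" "\<C> \<noteq> {}" "\<And>G. G \<in> \<C> \<Longrightarrow> closed G \<and> G \<noteq> {} \<and> G \<subseteq> F"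
    and chain: "\<And>G H. G \<in> \<C> \<Longrightarrow> H \<in> \<C> \<Longrightarrow> G \<subseteq> H \<or> H \<subseteq> G"
  shows "\<Inter>\<C> \<noteq> {}"
proof -
  have "F \<inter> \<Inter>\<C> \<noteq> {}"
  proof (rule compact_imp_fip[OF \<open>compact F\<close>])
    show "closed G" if "G \<in> \<C>" for G
      using assms(3) that by blast
    fix \<D> assume "finite \<D>" "\<D> \<subseteq> \<C>"
    show "F \<inter> \<Inter>\<D> \<noteq> {}"
    proof (cases "\<D> = {}")
      case True
      then show ?thesis
        using assms(2,3) by auto
    next
      case False
      have "subset.chain \<C> \<D>"
        using \<open>\<D> \<subseteq> \<C>\<close> chain by (auto simp: subset_chain_def)
      then have "\<Inter>\<D> \<in> \<D>"
        using Inter_in_chain \<open>finite \<D>\<close> False by blast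
      then show ?thesis
        using \<open>\<D> \<subseteq> \<C>\<close> assms(3) by blast
    qed
  qed
  then show ?thesis
    by blast
qed

lemma minimal_closed_extreme_subset:
  assumes "compact F" "closed F" "F \<noteq> {}" "extreme_subset K F"
  obtains M where "M \<subseteq> F" "closed M" "M \<noteq> {}" "extreme_subset K M"
    "\<And>G. G \<subseteq> M \<Longrightarrow> closed G \<Longrightarrow> G \<noteq> {} \<Longrightarrow> extreme_subset K G \<Longrightarrow> G = M"
proof -
  define \<A> where "\<A> = {G. G \<subseteq> F \<and> closed G \<and> G \<noteq> {} \<and> extreme_subset K G}"
  have "\<exists>M\<in>\<A>. \<forall>G\<in>\<A>. G \<subseteq> M \<longrightarrow> G = M"
  proof (rule predicate_Zorn[where P = "\<lambda>G H. H \<subseteq> G"])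
    show "partial_order_on \<A> (relation_of (\<lambda>G H. H \<subseteq> G) \<A>)"
      by (rule partial_order_on_relation_ofI) auto
    fix \<C> assume "\<C> \<in> Chains (relation_of (\<lambda>G H. H \<subseteq> G) \<A>)"
    then have "\<C> \<subseteq> \<A>" and chain: "\<And>G H. G \<in> \<C> \<Longrightarrow> H \<in> \<C> \<Longrightarrow> G \<subseteq> H \<or> H \<subseteq> G"
      by (auto simp: Chains_def relation_of_def)
    show "\<exists>L\<in>\<A>. \<forall>G\<in>\<C>. L \<subseteq> G"
    proof (cases "\<C> = {}")
      case True
      then show ?thesis
        using assms by (auto simp: \<A>_def)
    next
      case False
      have "\<Inter>\<C> \<noteq> {}"
        using \<open>\<C> \<subseteq> \<A>\<close>
        by (intro closed_chain_Inter_nonempty[OF \<open>compact F\<close> False _ chain]) (auto simp: \<A>_def)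
      moreover have "extreme_subset K (\<Inter>\<C>)"
        using \<open>\<C> \<subseteq> \<A>\<close> by (intro extreme_subset_Inter[OF False]) (auto simp: \<A>_def)
      ultimately have "\<Inter>\<C> \<in> \<A>"
        using \<open>\<C> \<subseteq> \<A>\<close> False unfolding \<A>_def by (auto intro: closed_Inter)
      then show ?thesis
        by blast
    qed
  qed
  then obtain M where "M \<in> \<A>" and minimal: "\<And>G. G \<in> \<A> \<Longrightarrow> G \<subseteq> M \<Longrightarrow> G = M"
    by blast
  show thesis
  proof (rule that)
    show "M \<subseteq> F" "closed M" "M \<noteq> {}" "extreme_subset K M"
      using \<open>M \<in> \<A>\<close> by (simp_all add: \<A>_def)
    show "G = M" if "G \<subseteq> M" "closed G" "G \<noteq> {}" "extreme_subset K G" for G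
      using that \<open>M \<subseteq> F\<close> by (intro minimal) (auto simp: \<A>_def)
  qed
qed

lemma closed_extreme_subset_meets_ext_pts:
  assumes "compact F" "closed F" "F \<noteq> {}" "extreme_subset K F"
  obtains f where "f \<in> F" "f \<in> ext_pts K"
proof -
  obtain M where M: "M \<subseteq> F" "closed M" "M \<noteq> {}" "extreme_subset K M"
    and minimal: "\<And>G. G \<subseteq> M \<Longrightarrow> closed G \<Longrightarrow> G \<noteq> {} \<Longrightarrow> extreme_subset K G \<Longrightarrow> G = M"
    using minimal_closed_extreme_subset[OF assms] by blast
  have "compact M"
    using compact_Int_closed[OF assms(1) M(2)] M(1) by (simp add: Int_absorb1)
  \<comment> \<open>By minimality \<open>M\<close> is a singleton: the maximisers of a point evaluation on \<open>M\<close>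
    form a closed extreme subset of \<open>M\<close>.\<close>
  have same_values: "f x = f' x" if "f \<in> M" "f' \<in> M" for f f' x
  proof -
    have "continuous_on M (\<lambda>g. g x)"
      by (rule continuous_on_subset[OF continuous_on_product_coordinates]) simp
    then obtain m where "m \<in> M" and max: "\<And>g. g \<in> M \<Longrightarrow> g x \<le> m x"
      using continuous_attains_sup[OF \<open>compact M\<close> \<open>M \<noteq> {}\<close>] by blast
    define G where "G = {g \<in> M. g x = m x}"
    have "extreme_subset K G"
      unfolding G_def using M(4) by (rule extreme_subset_maximizers) (simp_all add: max)
    moreover have "closed G"
      unfolding G_def using \<open>continuous_on M (\<lambda>g. g x)\<close> M(2)
      by (rule continuous_closed_preimage_constant)
    moreover have "G \<noteq> {}"
      using \<open>m \<in> M\<close> by (auto simp: G_def)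
    ultimately have "G = M"
      by (intro minimal) (auto simp: G_def)
    with that have "f \<in> G" "f' \<in> G"
      by simp_all
    then show ?thesis
      by (simp add: G_def)
  qed
  obtain f where "f \<in> M"
    using M(3) by blast
  then have "M = {f}"
    using same_values by blast
  have "f \<in> ext_pts K"
    unfolding ext_pts_def
  proof (intro CollectI conjI ballI allI impI)
    show "f \<in> K"
      using M(4) \<open>f \<in> M\<close> unfolding extreme_subset_def by blast
    fix g h t
    assume "g \<in> K" "h \<in> K" and comb: "0 < t \<and> t < 1 \<and> f = (\<lambda>x. t * g x + (1 - t) * h x)"
    then have "g \<in> M" "h \<in> M"
      using M(4) \<open>f \<in> M\<close> unfolding extreme_subset_def by metis+
    with \<open>M = {f}\<close> show "g = h"
      by blast
  qed
  with \<open>f \<in> M\<close> M(1) show thesis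
    by (intro that) auto
qed

theorem affine_continuous_attains_sup_at_ext_pts:
  fixes K :: "('a \<Rightarrow> real) set"
  assumes "compact K" "closed K" "K \<noteq> {}" "continuous_on K \<phi>"
    and affine: "\<And>g h t. g \<in> K \<Longrightarrow> h \<in> K \<Longrightarrow> 0 < t \<Longrightarrow> t < 1 \<Longrightarrow>
      \<phi> (\<lambda>x. t * g x + (1 - t) * h x) = t * \<phi> g + (1 - t) * \<phi> h"
  obtains f where "f \<in> ext_pts K" "\<And>g. g \<in> K \<Longrightarrow> \<phi> g \<le> \<phi> f"
proof -
  obtain f0 where "f0 \<in> K" and max: "\<And>g. g \<in> K \<Longrightarrow> \<phi> g \<le> \<phi> f0"
    using continuous_attains_sup[OF assms(1,3,4)] by blast
  define F where "F = {f \<in> K. \<phi> f = \<phi> f0}"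
  have "extreme_subset K F"
    unfolding F_def using extreme_subset_refl affine max by (rule extreme_subset_maximizers)
  moreover have "closed F"
    unfolding F_def using assms(4,2) by (rule continuous_closed_preimage_constant)
  moreover have "compact F"
    using compact_Int_closed[OF assms(1) \<open>closed F\<close>] by (simp add: F_def Int_absorb1)
  moreover have "F \<noteq> {}"
    using \<open>f0 \<in> K\<close> by (auto simp: F_def)
  ultimately obtain f where "f \<in> F" "f \<in> ext_pts K"
    using closed_extreme_subset_meets_ext_pts by blast
  with max show thesis
    by (intro that) (auto simp: F_def)
qed

section \<open>Continuity of integration on the unit ball\<close>

lemma pointwise_unit_ball_integrable:
  fixes M :: "'a::metric_space measure"
  assumes "finite_measure M" "sets M = sets borel" "f \<in> pointwise_unit_ball k"
  shows "integrable M f"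
proof -
  have "1-lipschitz_on UNIV f"
    using pointwise_unit_ball_lipschitz[OF assms(3)] by (intro lipschitz_onI) (auto simp: dist_real_def)
  then have "f \<in> borel_measurable borel"
    by (intro borel_measurable_continuous_onI lipschitz_on_continuous_on)
  then have "f \<in> borel_measurable M"
    by (subst measurable_cong_sets[OF assms(2) refl])
  moreover have "AE x in M. norm (f x) \<le> 1"
    using pointwise_unit_ball_abs_le[OF assms(3)] by simp
  ultimately show ?thesis
    using finite_measure.integrable_const_bound[OF assms(1)] by blast
qed

lemma LIMSEQ_of_close_on_dense_sequence:
  fixes f :: "'a::metric_space \<Rightarrow> real" and g :: "nat \<Rightarrow> 'a \<Rightarrow> real"
  assumes f: "\<And>y z. \<bar>f y - f z\<bar> \<le> dist y z"
    and g: "\<And>n y z. \<bar>g n y - g n z\<bar> \<le> dist y z"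
    and close: "\<And>n i. i < n \<Longrightarrow> \<bar>g n (s i) - f (s i)\<bar> < 1 / Suc n"
    and x: "x \<in> closure (range s)"
  shows "(\<lambda>n. g n x) \<longlonglongrightarrow> f x"
proof (rule LIMSEQ_I)
  fix r :: real
  assume "0 < r"
  then obtain i where i: "dist (s i) x < r / 3"
    using x by (metis closure_approachable rangeE zero_less_divide_iff zero_less_numeral)
  obtain N where N: "1 / Suc N < r / 3"
    using \<open>0 < r\<close> by (metis divide_pos_pos nat_approx_posE zero_less_numeral)
  have "norm (g n x - f x) < r" if n: "max N (Suc i) \<le> n" for n
  proof -
    have "\<bar>g n (s i) - f (s i)\<bar> < 1 / Suc n"
      using n by (intro close) simp
    also have "\<dots> \<le> 1 / Suc N"
      using n by (simp add: frac_le)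
    finally have "\<bar>g n (s i) - f (s i)\<bar> < r / 3"
      using N by linarith
    moreover have "\<bar>g n x - g n (s i)\<bar> < r / 3" "\<bar>f (s i) - f x\<bar> < r / 3"
      using g[of n x "s i"] f[of "s i" x] i by (simp_all add: dist_commute)
    ultimately show ?thesis
      unfolding real_norm_def by linarith
  qed
  then show "\<exists>N. \<forall>n\<ge>N. norm (g n x - f x) < r"
    by blast
qed

lemma continuous_on_integral_pointwise_unit_ball:
  fixes M :: "'a::metric_space measure" and s :: "nat \<Rightarrow> 'a"
  assumes M: "finite_measure M" "sets M = sets borel"
    and dense: "AE x in M. x \<in> closure (range s)"
  shows "continuous_on (pointwise_unit_ball k) (integral\<^sup>L M)"
  unfolding continuous_on_topological
proof (intro ballI allI impI)
  fix f :: "'a \<Rightarrow> real" and B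
  assume f: "f \<in> pointwise_unit_ball k" and "open B" "integral\<^sup>L M f \<in> B"
  then obtain e where "0 < e" and e: "ball (integral\<^sup>L M f) e \<subseteq> B"
    using open_contains_ball by blast
  \<comment> \<open>The product topology is not first countable, but these neighbourhoods suffice: the
    integrals only see the countably many points \<open>s i\<close>.\<close>
  define U where "U n = (\<Inter>i<n. {g. \<bar>g (s i) - f (s i)\<bar> < 1 / Suc n})" for n
  have "open (U n)" for n
    unfolding U_def
    by (intro open_INT finite_lessThan ballI open_Collect_less continuous_intros
        continuous_on_product_coordinates)
  have "f \<in> U n" for n
    unfolding U_def by simp
  show "\<exists>A. open A \<and> f \<in> A \<and> (\<forall>g\<in>pointwise_unit_ball k. g \<in> A \<longrightarrow> integral\<^sup>L M g \<in> B)"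
  proof (rule ccontr)
    assume "\<not> ?thesis"
    with \<open>open (U _)\<close> \<open>f \<in> U _\<close>
    have "\<exists>g\<in>pointwise_unit_ball k. g \<in> U n \<and> integral\<^sup>L M g \<notin> B" for n
      by blast
    then obtain g where g: "\<And>n. g n \<in> pointwise_unit_ball k" "\<And>n. g n \<in> U n"
      and outside: "\<And>n. integral\<^sup>L M (g n) \<notin> B"
      by metis
    have "(\<lambda>n. integral\<^sup>L M (g n)) \<longlonglongrightarrow> integral\<^sup>L M f"
    proof (rule integral_dominated_convergence[where w = "\<lambda>_. 1"])
      show "f \<in> borel_measurable M" "\<And>n. g n \<in> borel_measurable M"
        using pointwise_unit_ball_integrable[OF M] f g by (simp_all add: borel_measurable_integrable)
      show "integrable M (\<lambda>_. 1::real)"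
        using M by (simp add: finite_measure.integrable_const)
      show "AE x in M. norm (g n x) \<le> 1" for n
        using pointwise_unit_ball_abs_le[OF g(1)] by simp
      show "AE x in M. (\<lambda>n. g n x) \<longlonglongrightarrow> f x"
        using dense
      proof eventually_elim
        case (elim x)
        show ?case
        proof (rule LIMSEQ_of_close_on_dense_sequence[OF _ _ _ elim])
          show "\<bar>g n (s i) - f (s i)\<bar> < 1 / Suc n" if "i < n" for n i
            using g(2)[of n] that unfolding U_def by blast
        qed (use pointwise_unit_ball_lipschitz f g in blast)+
      qed
    qed
    then have "\<forall>\<^sub>F n in sequentially. dist (integral\<^sup>L M (g n)) (integral\<^sup>L M f) < e"
      using \<open>0 < e\<close> by (rule tendstoD)
    then obtain n where "dist (integral\<^sup>L M (g n)) (integral\<^sup>L M f) < e"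
      unfolding eventually_sequentially by blast
    then have "integral\<^sup>L M (g n) \<in> B"
      using e by (auto simp: dist_commute)
    with outside show False
      by blast
  qed
qed

lemma AE_mem_of_measure_eq_space:
  assumes "finite_measure M" "A \<in> sets M" "measure M A = measure M (space M)"
  shows "AE x in M. x \<in> A"
proof -
  have "measure M (space M - A) = 0"
    using finite_measure.finite_measure_compl[OF assms(1,2)] assms(3) by simp
  then have "emeasure M (space M - A) = 0"
    using finite_measure.emeasure_eq_measure[OF assms(1)] by simp
  then show ?thesis
    using assms(2) by (intro AE_I[of _ _ "space M - A"]) auto
qed

lemma separable_subset_closure_range:
  fixes S :: "'a::topological_space set"
  assumes "separable_space (subtopology euclidean S)"
  obtains s :: "nat \<Rightarrow> 'a" where "S \<subseteq> closure (range s)"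
proof -
  obtain C where "countable C" "C \<subseteq> S" and dense: "subtopology euclidean S closure_of C = S"
    using assms unfolding separable_space_def by auto
  then have "S \<inter> closure C = S"
    by (simp add: closure_of_subtopology euclidean_closure_of Int_absorb1)
  then have "S \<subseteq> closure C"
    by blast
  show thesis
  proof (cases "C = {}")
    case True
    with \<open>S \<subseteq> closure C\<close> show thesis
      by (intro that[of undefined]) auto
  next
    case False
    then have "range (from_nat_into C) = C"
      using \<open>countable C\<close> by (rule range_from_nat_into)
    with \<open>S \<subseteq> closure C\<close> show thesis
      by (intro that[of "from_nat_into C"]) simp
  qed
qed

lemma separable_signed_AE_closure_range:
  fixes Mp Mn :: "'a::metric_space measure"
  assumes "signed_borel_jordan Mp Mn" "separable_signed Mp Mn"
  obtains s :: "nat \<Rightarrow> 'a"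
  where "AE x in Mp. x \<in> closure (range s)" "AE x in Mn. x \<in> closure (range s)"
proof -
  have sets: "sets Mp = sets borel" "sets Mn = sets borel"
    and finite: "finite_measure Mp" "finite_measure Mn"
    using assms(1) unfolding signed_borel_jordan_def by auto
  then have space: "space Mp = UNIV" "space Mn = UNIV"
    by (metis sets_eq_imp_space_eq space_borel)+
  obtain S0 where "S0 \<in> sets borel" and separable: "separable_space (subtopology euclidean S0)"
    and full: "measure Mp S0 + measure Mn S0 = measure Mp UNIV + measure Mn UNIV"
    using assms(2) unfolding separable_signed_def total_variation_def by auto
  obtain s :: "nat \<Rightarrow> 'a" where "S0 \<subseteq> closure (range s)"
    using separable_subset_closure_range[OF separable] by blast
  have "measure Mp S0 \<le> measure Mp UNIV" "measure Mn S0 \<le> measure Mn UNIV"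
    using finite \<open>S0 \<in> sets borel\<close> sets space by (metis finite_measure.bounded_measure)+
  with full have "measure Mp S0 = measure Mp (space Mp)" "measure Mn S0 = measure Mn (space Mn)"
    unfolding space by linarith+
  then have "AE x in Mp. x \<in> S0" "AE x in Mn. x \<in> S0"
    using AE_mem_of_measure_eq_space finite sets \<open>S0 \<in> sets borel\<close> by auto
  with \<open>S0 \<subseteq> closure (range s)\<close> show thesis
    by (intro that[of s]) (auto elim!: eventually_mono)
qed

lemma signed_integral_convex_combination:
  assumes "signed_borel_jordan Mp Mn" "g \<in> pointwise_unit_ball k" "h \<in> pointwise_unit_ball k"
  shows "signed_integral Mp Mn (\<lambda>x. t * g x + (1 - t) * h x) =
    t * signed_integral Mp Mn g + (1 - t) * signed_integral Mp Mn h"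
proof -
  have Mp: "finite_measure Mp" "sets Mp = sets borel"
    and Mn: "finite_measure Mn" "sets Mn = sets borel"
    using assms(1) unfolding signed_borel_jordan_def by auto
  have "integrable Mp g" "integrable Mp h" "integrable Mn g" "integrable Mn h"
    using pointwise_unit_ball_integrable[OF Mp] pointwise_unit_ball_integrable[OF Mn] assms(2,3)
    by simp_all
  then show ?thesis
    unfolding signed_integral_def by (simp add: algebra_simps)
qed

lemma continuous_on_signed_integral:
  fixes Mp Mn :: "'a::metric_space measure"
  assumes "signed_borel_jordan Mp Mn" "separable_signed Mp Mn"
  shows "continuous_on (pointwise_unit_ball k) (signed_integral Mp Mn)"
proof -
  have Mp: "finite_measure Mp" "sets Mp = sets borel"
    and Mn: "finite_measure Mn" "sets Mn = sets borel"
    using assms(1) unfolding signed_borel_jordan_def by auto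
  obtain s :: "nat \<Rightarrow> 'a"
    where "AE x in Mp. x \<in> closure (range s)" "AE x in Mn. x \<in> closure (range s)"
    by (rule separable_signed_AE_closure_range[OF assms])
  then have "continuous_on (pointwise_unit_ball k) (integral\<^sup>L Mp)"
    "continuous_on (pointwise_unit_ball k) (integral\<^sup>L Mn)"
    using continuous_on_integral_pointwise_unit_ball[OF Mp]
      continuous_on_integral_pointwise_unit_ball[OF Mn] by simp_all
  then show ?thesis
    unfolding signed_integral_def[abs_def] by (rule continuous_on_diff)
qed

theorem proposition2p2:
  fixes Mp Mn :: "'a::metric_space measure" and k :: norm_kind
  assumes "signed_borel_jordan Mp Mn"
    and "separable_signed Mp Mn"
  shows "\<exists>f\<in>ext_pts (unit_ball k). dual_norm k Mp Mn = signed_integral Mp Mn f"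
proof -
  have "(\<lambda>_. 0) \<in> pointwise_unit_ball k"
    by (simp add: pointwise_unit_ball_def lip_budget_nonneg)
  then obtain f where f: "f \<in> ext_pts (pointwise_unit_ball k)"
    and max: "\<And>g. g \<in> pointwise_unit_ball k \<Longrightarrow> signed_integral Mp Mn g \<le> signed_integral Mp Mn f"
    using affine_continuous_attains_sup_at_ext_pts[OF compact_pointwise_unit_ball[of k]
        closed_pointwise_unit_ball[of k] _ continuous_on_signed_integral[OF assms, of k]]
      signed_integral_convex_combination[OF assms(1), of _ k] by blast
  then have "f \<in> pointwise_unit_ball k"
    unfolding ext_pts_def by blast
  with max have "dual_norm k Mp Mn = signed_integral Mp Mn f"
    unfolding dual_norm_def unit_ball_eq_pointwise_unit_ball by (intro cSup_eq_maximum) auto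
  with f show ?thesis
    unfolding unit_ball_eq_pointwise_unit_ball by blast
qed

end
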